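(* Let $p$ be a prime, let $H$ be any finite Abelian $p$-group (possibly trivial), and let $G\cong C_p\oplus H$. Let $S$ be a normal sequence over $G$ with $|S|=\mathsf{D}(G)+i-1$, where $i\in\{1,2,\dots,p-1\}$. Then $S=0^iT$, where $T$ is a zero-sumfree sequence over $G$.
   Context: $C_p$ denotes the cyclic group of order $p$. A sequence over a finite Abelian group $G$ (written additively) is a finite multiset of elements of $G$; its length $|S|$ is the number of terms counted with multiplicity, and a subsequence is a sub-multiset. $S$ is a zero-sum sequence if the sum of its terms is $0$; $S$ is zero-sumfree if no non-empty subsequence has sum $0$. The Davenport constant $\mathsf{D}(G)$ is the smallest positive integer $t$ such that every sequence over $G$ of length at least $t$ contains a non-empty zero-sum subsequence. A sequence $S$ over $G$ with $|S|\ge\mathsf{D}(G)$ is normal if every zero-sum subsequence $S'$ of $S$ satisfies $|S'|\le|S|-\mathsf{D}(G)+1$. The notation $0^iT$ denotes the sequence obtained from $T$ by adjoining $i$ copies of $0$. *)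

theory Defs
  imports Main "HOL-Library.Multiset" "HOL-Library.Product_Plus" "HOL-Library.Cardinality" "HOL-Computational_Algebra.Primes"
begin

text \<open>Sequences over an additive abelian group are multisets of group elements.\<close>

definition zero_sum_seq :: "'g::comm_monoid_add multiset \<Rightarrow> bool" where
  "zero_sum_seq S \<longleftrightarrow> sum_mset S = 0"

definition zero_sumfree :: "'g::comm_monoid_add multiset \<Rightarrow> bool" where
  "zero_sumfree S \<longleftrightarrow> (\<forall>S'. S' \<subseteq># S \<and> S' \<noteq> {#} \<longrightarrow> sum_mset S' \<noteq> 0)"

definition davenport :: "'g::{ab_group_add,finite} itself \<Rightarrow> nat" where
  "davenport _ = (LEAST t::nat. 0 < t \<and>
      (\<forall>S::'g multiset. t \<le> size S \<longrightarrow> (\<exists>S'. S' \<subseteq># S \<and> S' \<noteq> {#} \<and> sum_mset S' = 0)))"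

definition normal_seq :: "'g::{ab_group_add,finite} multiset \<Rightarrow> bool" where
  "normal_seq S \<longleftrightarrow> davenport TYPE('g) \<le> size S \<and>
     (\<forall>S'. S' \<subseteq># S \<and> zero_sum_seq S' \<longrightarrow> size S' \<le> size S - davenport TYPE('g) + 1)"

definition nsmul :: "nat \<Rightarrow> 'g::comm_monoid_add \<Rightarrow> 'g" where
  "nsmul n g = (\<Sum>_<n. g)"

definition cyclic_group_type :: "'g::{ab_group_add,finite} itself \<Rightarrow> bool" where
  "cyclic_group_type _ \<longleftrightarrow> (\<exists>g::'g. \<forall>x. \<exists>n. x = nsmul n g)"

definition group_iso :: "('a::ab_group_add \<Rightarrow> 'b::ab_group_add) \<Rightarrow> bool" where
  "group_iso f \<longleftrightarrow> bij f \<and> (\<forall>x y. f (x + y) = f x + f y)"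

end

theory Submission
  imports Defs "HOL-Library.Poly_Mapping" "HOL-Number_Theory.Cong" "HOL.Modules"
begin

text \<open>Only \<open>|G| = p^n\<close> matters. Write \<open>G\<close> over a basis \<open>g_j\<close> of orders \<open>p^a_j\<close>. The sequence
  \<open>\<Prod>_j g_j^(p^a_j - 1)\<close> is zero-sumfree, and Olson's group ring argument shows that for every
  sequence of length \<open>> \<Sum>_j (p^a_j - 1)\<close> the signed number \<open>\<Sum> (-1)^|I|\<close> of subsequences
  \<open>I\<close> with a prescribed sum is divisible by \<open>p\<close>; in particular \<open>D(G) = 1 + \<Sum>_j (p^a_j - 1)\<close>.
  For a zero-free sequence of length \<open>D(G) - 1 + k\<close> with \<open>0 < k < p\<close>, summing these
  congruences over all subsequences \<open>W\<close> with weight \<open>k - |W|\<close> leaves only \<open>k \<not>\<equiv> 0\<close>, unless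
  there is a zero-sum subsequence of length \<open>> k\<close>. If a normal sequence of length \<open>D(G) + i - 1\<close>
  had fewer than \<open>i\<close> zeros, such a subsequence of its non-zero part together with the zeros would
  be too long; with exactly \<open>i\<close> zeros the same length bound makes the non-zero part zero-sumfree.\<close>

section \<open>Multiples in abelian groups\<close>

lemma nsmul_0 [simp]: "nsmul 0 g = 0"
  by (simp add: nsmul_def)

lemma nsmul_Suc [simp]: "nsmul (Suc n) g = g + nsmul n g"
  by (simp add: nsmul_def add.commute)

lemma nsmul_1 [simp]: "nsmul 1 g = g"
  by (simp add: nsmul_def)

lemma nsmul_add_left: "nsmul (m + n) g = nsmul m g + nsmul n g"
  by (induct m) (simp_all add: add.assoc)

lemma nsmul_zero_right [simp]: "nsmul n (0::'a::comm_monoid_add) = 0"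
  by (simp add: nsmul_def)

lemma nsmul_add_right: "nsmul n (a + b) = nsmul n a + nsmul n (b::'a::comm_monoid_add)"
  by (induct n) (simp_all add: algebra_simps)

lemma nsmul_mult: "nsmul (m * n) g = nsmul m (nsmul n g)"
  by (induct m) (simp_all add: nsmul_add_left nsmul_add_right)

lemma nsmul_minus_right: "nsmul n (- g) = - nsmul n (g::'a::ab_group_add)"
  by (induct n) simp_all

lemma nsmul_diff_right: "nsmul n (a - b) = nsmul n a - nsmul n (b::'a::ab_group_add)"
  using nsmul_add_right[of n a "- b"] by (simp add: nsmul_minus_right)

lemma sum_mset_replicate_mset: "sum_mset (replicate_mset n g) = nsmul n g"
  by (induct n) simp_all

lemma nsmul_mod:
  assumes "nsmul m x = 0"
  shows "nsmul n x = nsmul (n mod m) x"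
proof -
  have "nsmul n x = nsmul (n div m * m + n mod m) x"
    by simp
  also have "\<dots> = nsmul (n mod m) x"
    by (simp only: nsmul_add_left nsmul_mult assms) simp
  finally show ?thesis .
qed

lemma nsmul_card_eq_0: "nsmul CARD('g) (x::'g::{ab_group_add,finite}) = 0"
proof -
  have "(\<Sum>y\<in>UNIV. x + y) = (\<Sum>y\<in>(UNIV::'g set). y)"
    by (rule sum.reindex_bij_witness[where i="\<lambda>y. y - x" and j="\<lambda>y. x + y"]) auto
  moreover have "(\<Sum>_\<in>A. x) = nsmul (card A) x" if "finite A" for A :: "'g set"
    using that by (induct A rule: finite_induct) simp_all
  ultimately show ?thesis
    by (simp add: sum.distrib)
qed

lemma prime_power_dvd_if_nsmul_eq_0:
  assumes p: "prime p" and ga: "nsmul (p ^ a) g = 0" and ga1: "nsmul (p ^ (a - 1)) g \<noteq> 0"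
    and gc: "nsmul c g = 0"
  shows "p ^ a dvd c"
proof (cases "c = 0")
  case False
  define d where "d = gcd c (p ^ a)"
  obtain x y where "c * x = p ^ a * y + d"
    using bezout_nat[OF False, of "p ^ a"] d_def by blast
  then have "nsmul d g = nsmul (c * x) g"
    by (simp add: nsmul_add_left nsmul_mult ga mult.commute[of _ x] mult.commute[of "p ^ a" y])
  then have gd: "nsmul d g = 0"
    by (simp add: nsmul_mult mult.commute[of c] gc)
  obtain b where b: "b \<le> a" "d = p ^ b"
    using divides_primepow_nat[OF p, of d a] by (auto simp: d_def)
  have "b = a"
  proof (rule ccontr)
    assume "b \<noteq> a"
    then have "p ^ (a - 1) = p ^ (a - 1 - b) * d"
      using b by (simp flip: power_add)
    then show False
      using ga1 gd by (simp add: nsmul_mult)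
  qed
  then show ?thesis
    using b by (metis d_def gcd_dvd1)
qed simp

lemma nsmul_coprime_inverse:
  assumes "coprime r m" and "nsmul m y = 0"
  shows "\<exists>s. nsmul s (nsmul r y) = y"
proof -
  obtain s where s: "[r * s = 1] (mod m)"
    using cong_solve_coprime_nat[OF assms(1)] by (auto simp: One_nat_def)
  have "nsmul s (nsmul r y) = nsmul (r * s) y"
    by (metis nsmul_mult mult.commute)
  also have "\<dots> = nsmul ((r * s) mod m) y"
    by (rule nsmul_mod[OF assms(2)])
  also have "\<dots> = y"
    using s nsmul_mod[OF assms(2), of 1] by (simp add: cong_def)
  finally show ?thesis by blast
qed

section \<open>Bases of finite abelian \<open>p\<close>-groups\<close>

definition add_subgroup :: "'g::ab_group_add set \<Rightarrow> bool" where
  "add_subgroup A \<longleftrightarrow> 0 \<in> A \<and> (\<forall>x\<in>A. \<forall>y\<in>A. x + y \<in> A) \<and> (\<forall>x\<in>A. - x \<in> A)"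

lemma add_subgroup_0: "add_subgroup A \<Longrightarrow> 0 \<in> A"
  by (simp add: add_subgroup_def)

lemma add_subgroup_add: "add_subgroup A \<Longrightarrow> x \<in> A \<Longrightarrow> y \<in> A \<Longrightarrow> x + y \<in> A"
  by (simp add: add_subgroup_def)

lemma add_subgroup_minus: "add_subgroup A \<Longrightarrow> x \<in> A \<Longrightarrow> - x \<in> A"
  by (simp add: add_subgroup_def)

lemma add_subgroup_diff: "add_subgroup A \<Longrightarrow> x \<in> A \<Longrightarrow> y \<in> A \<Longrightarrow> x - y \<in> A"
  using add_subgroup_add[of A x "- y"] add_subgroup_minus[of A y] by simp

lemma add_subgroup_nsmul: "add_subgroup A \<Longrightarrow> x \<in> A \<Longrightarrow> nsmul n x \<in> A"
  by (induct n) (simp_all add: add_subgroup_0 add_subgroup_add)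

lemma add_subgroup_sum_mset: "add_subgroup A \<Longrightarrow> set_mset M \<subseteq> A \<Longrightarrow> sum_mset M \<in> A"
  by (induct M) (simp_all add: add_subgroup_0 add_subgroup_add)

lemma add_subgroup_UNIV: "add_subgroup UNIV"
  by (simp add: add_subgroup_def)

definition cyclic_plus :: "'g::comm_monoid_add \<Rightarrow> 'g set \<Rightarrow> 'g set" where
  "cyclic_plus g K = {nsmul c g + k | c k. k \<in> K}"

lemma cyclic_plus_memI: "k \<in> K \<Longrightarrow> nsmul c g + k \<in> cyclic_plus g K"
  by (auto simp: cyclic_plus_def)

lemma subset_cyclic_plus: "K \<subseteq> cyclic_plus g K"
  using cyclic_plus_memI[of _ K 0 g] by auto

lemma cyclic_plus_mono: "K \<subseteq> L \<Longrightarrow> cyclic_plus g K \<subseteq> cyclic_plus g L"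
  by (auto simp: cyclic_plus_def)

lemma mem_cyclic_plus_self: "0 \<in> K \<Longrightarrow> y \<in> cyclic_plus y K"
  using cyclic_plus_memI[of 0 K 1 y] by simp

lemma cyclic_plus_subset:
  "add_subgroup A \<Longrightarrow> y \<in> A \<Longrightarrow> K \<subseteq> A \<Longrightarrow> cyclic_plus y K \<subseteq> A"
  by (auto simp: cyclic_plus_def intro: add_subgroup_add add_subgroup_nsmul)

lemma add_subgroup_cyclic_plus:
  fixes g :: "'g::{ab_group_add,finite}"
  assumes K: "add_subgroup K"
  shows "add_subgroup (cyclic_plus g K)"
  unfolding add_subgroup_def
proof (intro conjI ballI)
  show "0 \<in> cyclic_plus g K"
    using subset_cyclic_plus add_subgroup_0[OF K] by blast
next
  fix u v assume "u \<in> cyclic_plus g K" "v \<in> cyclic_plus g K"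
  then obtain c1 k1 c2 k2 where "u = nsmul c1 g + k1" "k1 \<in> K" "v = nsmul c2 g + k2" "k2 \<in> K"
    by (auto simp: cyclic_plus_def)
  then have "u + v = nsmul (c1 + c2) g + (k1 + k2)" "k1 + k2 \<in> K"
    using K by (simp_all add: nsmul_add_left add_subgroup_add algebra_simps)
  then show "u + v \<in> cyclic_plus g K"
    by (simp add: cyclic_plus_memI)
next
  fix u assume "u \<in> cyclic_plus g K"
  then obtain c k where u: "u = nsmul c g + k" "k \<in> K"
    by (auto simp: cyclic_plus_def)
  \<comment> \<open>in a finite group \<open>- g = (|G| - 1) g\<close>\<close>
  have "c * (CARD('g) - 1) + c = c * CARD('g)"
    by (simp add: algebra_simps)
  then have "nsmul (c * (CARD('g) - 1)) g + nsmul c g = 0"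
    by (metis nsmul_add_left nsmul_mult mult.commute nsmul_card_eq_0 nsmul_zero_right)
  then have "- u = nsmul (c * (CARD('g) - 1)) g + - k"
    using u(1) by (simp add: add_eq_0_iff2 algebra_simps)
  then show "- u \<in> cyclic_plus g K"
    using cyclic_plus_memI[OF add_subgroup_minus[OF K u(2)]] by simp
qed

lemma exists_nsmul_prime_power_prime_mem:
  assumes "0 \<in> C" and "x \<notin> C" and "nsmul (p ^ a) x = 0"
  shows "\<exists>j. nsmul (p ^ j) x \<notin> C \<and> nsmul p (nsmul (p ^ j) x) \<in> C"
  using assms(2,3)
proof (induct a arbitrary: x)
  case 0
  then show ?case using assms(1) by simp
next
  case (Suc a)
  show ?case
  proof (cases "nsmul p x \<in> C")
    case True
    then show ?thesis using Suc.prems(1) by (intro exI[of _ 0]) simp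
  next
    case False
    moreover have "nsmul (p ^ a) (nsmul p x) = 0"
      using Suc.prems(2) by (simp add: mult.commute flip: nsmul_mult)
    ultimately obtain j where "nsmul (p ^ j) (nsmul p x) \<notin> C" "nsmul p (nsmul (p ^ j) (nsmul p x)) \<in> C"
      using Suc.hyps by blast
    then show ?thesis
      by (intro exI[of _ "Suc j"]) (simp add: mult.commute flip: nsmul_mult)
  qed
qed

lemma exists_shift_prime_multiple_mem:
  assumes p: "prime p" and K: "add_subgroup K"
    and disj: "\<forall>c. nsmul c g \<in> K \<longrightarrow> nsmul c g = 0"
    and ga: "nsmul (p ^ a) g = 0" "nsmul (p ^ (a - 1)) g \<noteq> 0"
    and x: "x \<notin> cyclic_plus g K" "nsmul p x \<in> cyclic_plus g K" "nsmul (p ^ a) x = 0"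
  shows "\<exists>m. x - nsmul m g \<notin> cyclic_plus g K \<and> nsmul p (x - nsmul m g) \<in> K"
proof -
  obtain m k where mk: "nsmul p x = nsmul m g + k" "k \<in> K"
    using x(2) by (auto simp: cyclic_plus_def)
  have "a \<noteq> 0"
    using ga by (intro notI) simp
  then have pa: "p ^ a = p ^ (a - 1) * p"
    by (simp flip: power_Suc2)
  \<comment> \<open>multiplying by \<open>p^(a-1)\<close> kills \<open>p x\<close>, which forces \<open>p\<close> to divide \<open>m\<close>\<close>
  have "nsmul (p ^ (a - 1)) (nsmul p x) = 0"
    using x(3) by (simp add: pa nsmul_mult)
  then have "nsmul (p ^ (a - 1) * m) g = - nsmul (p ^ (a - 1)) k"
    by (simp add: mk nsmul_add_right nsmul_mult eq_neg_iff_add_eq_0)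
  also have "\<dots> \<in> K"
    using K mk(2) by (simp add: add_subgroup_minus add_subgroup_nsmul)
  finally have "p ^ (a - 1) * p dvd p ^ (a - 1) * m"
    using disj prime_power_dvd_if_nsmul_eq_0[OF p ga] pa by metis
  then have "p dvd m"
    using p by (simp add: prime_gt_0_nat)
  then obtain m' where m': "m = p * m'" ..
  have "nsmul p (x - nsmul m' g) = k"
    using mk(1) by (simp add: m' nsmul_mult nsmul_diff_right)
  moreover have "x - nsmul m' g \<notin> cyclic_plus g K"
  proof
    assume "x - nsmul m' g \<in> cyclic_plus g K"
    then obtain c k' where "x - nsmul m' g = nsmul c g + k'" "k' \<in> K"
      by (auto simp: cyclic_plus_def)
    then have "x = nsmul (m' + c) g + k'"
      by (simp add: nsmul_add_left algebra_simps)
    then show False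
      using x(1) \<open>k' \<in> K\<close> cyclic_plus_memI by metis
  qed
  ultimately show ?thesis
    using mk(2) by auto
qed

lemma cyclic_plus_keeps_disjoint:
  assumes p: "prime p" and K: "add_subgroup K"
    and disj: "\<forall>c. nsmul c g \<in> K \<longrightarrow> nsmul c g = 0"
    and y: "y \<notin> cyclic_plus g K" "nsmul p y \<in> K" "nsmul (p ^ a) y = 0"
  shows "\<forall>c. nsmul c g \<in> cyclic_plus y K \<longrightarrow> nsmul c g = 0"
proof (intro allI impI)
  fix c assume "nsmul c g \<in> cyclic_plus y K"
  then obtain n k where nk: "nsmul c g = nsmul n y + k" "k \<in> K"
    by (auto simp: cyclic_plus_def)
  define r where "r = n mod p"
  have "nsmul n y = nsmul (n div p * p + r) y"
    by (simp add: r_def)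
  also have "\<dots> = nsmul (n div p) (nsmul p y) + nsmul r y"
    by (simp only: nsmul_add_left nsmul_mult)
  finally have "nsmul n y = nsmul (n div p) (nsmul p y) + nsmul r y" .
  then have cg: "nsmul c g = nsmul r y + (nsmul (n div p) (nsmul p y) + k)"
    using nk(1) by (simp add: algebra_simps)
  have k': "nsmul (n div p) (nsmul p y) + k \<in> K"
    using K y(2) nk(2) by (simp add: add_subgroup_add add_subgroup_nsmul)
  show "nsmul c g = 0"
  proof (cases "r = 0")
    case True
    then have "nsmul c g \<in> K"
      using cg k' by simp
    then show ?thesis using disj by blast
  next
    case False
    \<comment> \<open>then \<open>r\<close> is invertible modulo the order of \<open>y\<close>, so \<open>y\<close> would lie in \<open>\<langle>g\<rangle> + K\<close>\<close>
    have "r < p"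
      using p prime_gt_0_nat by (simp add: r_def)
    then have "\<not> p dvd r"
      using False by (auto dest: dvd_imp_le)
    then have "coprime r (p ^ a)"
      using p by (simp add: prime_imp_coprime_nat coprime_commute)
    then obtain s where "nsmul s (nsmul r y) = y"
      using nsmul_coprime_inverse[OF _ y(3)] by blast
    then have "y = nsmul (s * c) g + - nsmul s (nsmul (n div p) (nsmul p y) + k)"
      using cg by (simp add: nsmul_mult nsmul_add_right)
    moreover have "- nsmul s (nsmul (n div p) (nsmul p y) + k) \<in> K"
      using K k' by (simp add: add_subgroup_minus add_subgroup_nsmul)
    ultimately have "y \<in> cyclic_plus g K"
      using cyclic_plus_memI by metis
    then show ?thesis using y(1) by contradiction
  qed
qed

lemma exists_complement:
  fixes A :: "'g::{ab_group_add,finite} set"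
  assumes p: "prime p" and A: "add_subgroup A" and "g \<in> A"
    and kill: "\<forall>x\<in>A. nsmul (p ^ a) x = 0" and ga: "nsmul (p ^ (a - 1)) g \<noteq> 0"
  shows "\<exists>K. add_subgroup K \<and> K \<subseteq> A \<and> (\<forall>c. nsmul c g \<in> K \<longrightarrow> nsmul c g = 0)
    \<and> A \<subseteq> cyclic_plus g K"
proof -
  define P where "P K \<longleftrightarrow> add_subgroup K \<and> K \<subseteq> A \<and> (\<forall>c. nsmul c g \<in> K \<longrightarrow> nsmul c g = 0)"
    for K :: "'g set"
  have "P {0}"
    using A by (auto simp: P_def add_subgroup_def add_subgroup_0)
  then obtain K where PK: "P K" and Kmax: "\<And>K'. P K' \<Longrightarrow> card K' \<le> card K"
    using ex_has_greatest_nat[of P "{0}" card "CARD('g) + 1"]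
    by (metis card_mono finite le_imp_less_Suc Suc_eq_plus1 subset_UNIV)
  then have K: "add_subgroup K" "K \<subseteq> A" "\<forall>c. nsmul c g \<in> K \<longrightarrow> nsmul c g = 0"
    by (auto simp: P_def)
  have "A \<subseteq> cyclic_plus g K"
  proof
    fix x0 assume "x0 \<in> A"
    show "x0 \<in> cyclic_plus g K"
    proof (rule ccontr)
      assume "x0 \<notin> cyclic_plus g K"
      then obtain j where "nsmul (p ^ j) x0 \<notin> cyclic_plus g K"
        "nsmul p (nsmul (p ^ j) x0) \<in> cyclic_plus g K"
        using exists_nsmul_prime_power_prime_mem[of "cyclic_plus g K" x0 p a]
          add_subgroup_0[OF add_subgroup_cyclic_plus[OF K(1)]] kill \<open>x0 \<in> A\<close> by blast
      moreover have "nsmul (p ^ j) x0 \<in> A"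
        using A \<open>x0 \<in> A\<close> by (rule add_subgroup_nsmul)
      ultimately obtain y where y: "y \<in> A" "y \<notin> cyclic_plus g K" "nsmul p y \<in> K"
        using exists_shift_prime_multiple_mem[OF p K(1,3)] kill \<open>g \<in> A\<close> ga
        by (metis A add_subgroup_diff add_subgroup_nsmul)
      \<comment> \<open>adjoining \<open>y\<close> to \<open>K\<close> contradicts the maximality of \<open>K\<close>\<close>
      have "P (cyclic_plus y K)"
        using cyclic_plus_keeps_disjoint[OF p K(1,3) y(2,3)] kill[rule_format, OF y(1)]
          add_subgroup_cyclic_plus[OF K(1)] cyclic_plus_subset[OF A y(1) K(2)] by (simp add: P_def)
      moreover have "K \<subset> cyclic_plus y K"
        using subset_cyclic_plus[of K g] subset_cyclic_plus[of K y] y(2)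
          mem_cyclic_plus_self[OF add_subgroup_0[OF K(1)]] by blast
      ultimately show False
        using Kmax psubset_card_mono[of "cyclic_plus y K" K] by fastforce
    qed
  qed
  then show ?thesis
    using K by blast
qed

lemma exists_elem_of_order_exponent:
  assumes "x \<in> A" "x \<noteq> 0" and "\<forall>x\<in>A. nsmul (p ^ N) x = 0"
  shows "\<exists>a g. g \<in> A \<and> (\<forall>x\<in>A. nsmul (p ^ a) x = 0) \<and> nsmul (p ^ (a - 1)) g \<noteq> 0"
proof -
  define a where "a = (LEAST a. \<forall>x\<in>A. nsmul (p ^ a) x = 0)"
  have ka: "\<forall>x\<in>A. nsmul (p ^ a) x = 0"
    unfolding a_def by (rule LeastI[of _ N]) (use assms(3) in simp)
  have "a \<noteq> 0"
    using ka assms(1,2) by (intro notI) simp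
  then have "\<not> (\<forall>x\<in>A. nsmul (p ^ (a - 1)) x = 0)"
    using not_less_Least[of "a - 1" "\<lambda>a. \<forall>x\<in>A. nsmul (p ^ a) x = 0"] unfolding a_def by fastforce
  then show ?thesis
    using ka by blast
qed

fun nsmul_span :: "'g::comm_monoid_add list \<Rightarrow> 'g set" where
  "nsmul_span [] = {0}"
| "nsmul_span (g # gs) = cyclic_plus g (nsmul_span gs)"

text \<open>For a basis \<open>g_j\<close> of orders \<open>p^a_j\<close> this is the sequence \<open>\<Prod>_j g_j^(p^a_j - 1)\<close>,
  of length \<open>D\<^sup>*(G) - 1\<close>.\<close>

fun extremal_seq :: "nat \<Rightarrow> ('g \<times> nat) list \<Rightarrow> 'g multiset" where
  "extremal_seq p [] = {#}"
| "extremal_seq p ((g, a) # es) = replicate_mset (p ^ a - 1) g + extremal_seq p es"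

lemma set_mset_extremal_seq: "set_mset (extremal_seq p es) \<subseteq> fst ` set es"
  by (induct p es rule: extremal_seq.induct) (fastforce split: if_splits)+

lemma subseteq_mset_plusE:
  assumes "T \<subseteq># A + B"
  obtains T1 T2 where "T = T1 + T2" "T1 \<subseteq># A" "T2 \<subseteq># B"
proof
  show "T = T \<inter># A + (T - T \<inter># A)"
    by (metis subset_mset.inf_le1 subset_mset.add_diff_inverse)
  show "T \<inter># A \<subseteq># A"
    by simp
  show "T - T \<inter># A \<subseteq># B"
    using assms unfolding subseteq_mset_def by (simp add: le_diff_conv add.commute)
qed

lemma zero_sumfree_extremal_seq_Cons:
  assumes p: "prime p" and K: "add_subgroup K" and disj: "\<forall>c. nsmul c g \<in> K \<longrightarrow> nsmul c g = 0"
    and ga: "nsmul (p ^ a) g = 0" "nsmul (p ^ (a - 1)) g \<noteq> 0"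
    and es: "fst ` set es \<subseteq> K" "zero_sumfree (extremal_seq p es)"
  shows "zero_sumfree (extremal_seq p ((g, a) # es))"
  unfolding zero_sumfree_def
proof (intro allI impI notI)
  fix S assume S: "S \<subseteq># extremal_seq p ((g, a) # es) \<and> S \<noteq> {#}" and S0: "sum_mset S = 0"
  then have "S \<subseteq># replicate_mset (p ^ a - 1) g + extremal_seq p es"
    by simp
  then obtain T1 T2 where T: "S = T1 + T2" "T1 \<subseteq># replicate_mset (p ^ a - 1) g"
      "T2 \<subseteq># extremal_seq p es"
    by (rule subseteq_mset_plusE)
  then obtain c where c: "c \<le> p ^ a - 1" "T1 = replicate_mset c g"
    by (auto elim: msubseteq_replicate_msetE)
  have "set_mset T2 \<subseteq> K"
    using set_mset_mono[OF T(3)] set_mset_extremal_seq[of p es] es(1) by blast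
  then have "nsmul c g = - sum_mset T2" and "- sum_mset T2 \<in> K"
    using S0 T(1) c(2) K by (simp_all add: sum_mset_replicate_mset eq_neg_iff_add_eq_0
        add_subgroup_minus add_subgroup_sum_mset)
  then have "p ^ a dvd c"
    using disj prime_power_dvd_if_nsmul_eq_0[OF p ga] by metis
  moreover have "c < p ^ a"
    using c(1) p prime_gt_0_nat by (simp add: less_eq_iff_succ_less)
  ultimately have "c = 0"
    using nat_dvd_not_less by blast
  then show False
    using es(2) S S0 T c(2) unfolding zero_sumfree_def by auto
qed

theorem exists_basis:
  fixes A :: "'g::{ab_group_add,finite} set"
  assumes p: "prime p" and kill: "\<forall>x::'g. nsmul (p ^ N) x = 0" and "add_subgroup A"
  shows "\<exists>es. (\<forall>(g, a)\<in>set es. g \<in> A \<and> nsmul (p ^ a) g = 0) \<and> A \<subseteq> nsmul_span (map fst es)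
    \<and> zero_sumfree (extremal_seq p es)"
  using assms(3)
proof (induct "card A" arbitrary: A rule: less_induct)
  case less
  show ?case
  proof (cases "A \<subseteq> {0}")
    case True
    then show ?thesis
      by (intro exI[of _ "[]"]) (auto simp: zero_sumfree_def)
  next
    case False
    then obtain x where "x \<in> A" "x \<noteq> 0"
      by blast
    then have "\<exists>a g. g \<in> A \<and> (\<forall>x\<in>A. nsmul (p ^ a) x = 0) \<and> nsmul (p ^ (a - 1)) g \<noteq> 0"
      using kill by (intro exists_elem_of_order_exponent[where N = N]) auto
    then obtain a g where g: "g \<in> A" "\<forall>x\<in>A. nsmul (p ^ a) x = 0" "nsmul (p ^ (a - 1)) g \<noteq> 0"
      by blast
    then obtain K where K: "add_subgroup K" "K \<subseteq> A" "\<forall>c. nsmul c g \<in> K \<longrightarrow> nsmul c g = 0"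
      "A \<subseteq> cyclic_plus g K"
      using exists_complement[OF p less.prems] by blast
    have "g \<notin> K"
    proof
      assume "g \<in> K"
      then have "g = 0"
        using K(3) nsmul_1[of g] by metis
      then show False
        using g(3) by simp
    qed
    then have "card K < card A"
      using K(2) g(1) by (intro psubset_card_mono) auto
    then obtain es where es: "\<forall>(h, b)\<in>set es. h \<in> K \<and> nsmul (p ^ b) h = 0"
      "K \<subseteq> nsmul_span (map fst es)" "zero_sumfree (extremal_seq p es)"
      using less(1)[OF _ K(1)] by blast
    have "fst ` set es \<subseteq> K"
      using es(1) by auto
    then have "zero_sumfree (extremal_seq p ((g, a) # es))"
      using zero_sumfree_extremal_seq_Cons[OF p K(1,3)] g es(3) by blast
    moreover have "A \<subseteq> nsmul_span (map fst ((g, a) # es))"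
      using K(4) cyclic_plus_mono[OF es(2)] by auto
    moreover have "\<forall>(h, b)\<in>set ((g, a) # es). h \<in> A \<and> nsmul (p ^ b) h = 0"
      using g es(1) K(2) by auto
    ultimately show ?thesis
      by blast
  qed
qed

section \<open>Olson's theorem: the Davenport constant of a \<open>p\<close>-group\<close>

text \<open>The ring as a module over itself: \<open>ideal.span Y\<close> is the ideal generated by \<open>Y\<close>.\<close>

interpretation ideal: module "(*) :: 'a::comm_ring_1 \<Rightarrow> 'a \<Rightarrow> 'a"
  by unfold_locales (simp_all add: algebra_simps)

lemma of_nat_prime_dvd_add_power:
  fixes a b :: "'r::comm_ring_1"
  assumes p: "prime p"
  shows "of_nat p dvd ((a + b) ^ p - a ^ p - b ^ p)"
proof -
  have p0: "p > 0" using p prime_gt_0_nat by blast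
  have "{..p} = insert p (insert 0 {1..<p})" using p0 by auto
  then have "(a + b) ^ p - a ^ p - b ^ p = (\<Sum>k\<in>{1..<p}. of_nat (p choose k) * a ^ k * b ^ (p - k))"
    using p0 by (simp add: binomial_ring)
  moreover have "(of_nat p :: 'r) dvd of_nat (p choose k)" if "k \<in> {1..<p}" for k
    using dvd_choose_prime[of k p] p that of_nat_dvd_iff by auto
  ultimately show ?thesis
    by (auto intro!: dvd_sum dvd_mult2)
qed

lemma dvd_power_diff: "(c::'r::comm_ring_1) dvd a - b \<Longrightarrow> c dvd a ^ n - b ^ n"
  by (simp add: power_diff_sumr2)

lemma prod_dvd_if_mem_ideal_span:
  fixes z :: "'j \<Rightarrow> 'r::comm_ring_1"
  assumes "\<forall>(y, d)\<in>set gs. c dvd y ^ d" and "finite J"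
    and "\<forall>j\<in>J. z j \<in> ideal.span (fst ` set gs)"
    and "(\<Sum>(y, d)\<leftarrow>gs. d - 1) < card J"
  shows "c dvd (\<Prod>j\<in>J. z j)"
  using assms
proof (induct gs arbitrary: J z)
  case Nil
  then obtain j where "j \<in> J" "z j = 0" by fastforce
  then show ?case using Nil.prems(2) by (metis dvd_0_right prod_zero)
next
  case (Cons yd gs)
  obtain y d where yd: "yd = (y, d)" by fastforce
  have "\<forall>j\<in>J. \<exists>w. z j - w * y \<in> ideal.span (fst ` set gs)"
    using Cons.prems(3) yd by (simp add: ideal.span_breakdown_eq)
  then obtain w where w: "\<And>j. j \<in> J \<Longrightarrow> z j - w j * y \<in> ideal.span (fst ` set gs)"
    by metis
  define z' where "z' j = z j - w j * y" for j
  have "(\<Prod>j\<in>J. z j) = (\<Prod>j\<in>J. w j * y + z' j)"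
    by (simp add: z'_def)
  also have "\<dots> = (\<Sum>A\<in>Pow J. (\<Prod>j\<in>A. w j) * y ^ card A * (\<Prod>j\<in>J - A. z' j))"
    by (simp add: prod_add[OF Cons.prems(2)] prod.distrib)
  also have "c dvd \<dots>"
  proof (rule dvd_sum)
    \<comment> \<open>each term has at least \<open>d\<close> factors \<open>y\<close> or more than the bound for \<open>gs\<close> factors \<open>z'\<close>\<close>
    fix A assume A: "A \<in> Pow J"
    show "c dvd (\<Prod>j\<in>A. w j) * y ^ card A * (\<Prod>j\<in>J - A. z' j)"
    proof (cases "d \<le> card A")
      case True
      then have "y ^ d dvd y ^ card A"
        by (rule le_imp_power_dvd)
      then have "c dvd y ^ card A"
        using Cons.prems(1) yd dvd_trans by auto
      then show ?thesis
        by (simp add: dvd_mult dvd_mult2)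
    next
      case False
      have "card (J - A) = card J - card A"
        using A Cons.prems(2) by (simp add: card_Diff_subset finite_subset)
      then have "(\<Sum>(y, d)\<leftarrow>gs. d - 1) < card (J - A)"
        using Cons.prems(4) yd False by simp
      then have "c dvd (\<Prod>j\<in>J - A. z' j)"
        using Cons.hyps[of "J - A" z'] Cons.prems(1,2) w by (auto simp: z'_def)
      then show ?thesis by simp
    qed
  qed
  finally show ?case .
qed

text \<open>The group ring \<open>\<int>[G]\<close> is modelled as \<open>'g \<Rightarrow>\<^sub>0 int\<close>; \<open>Xg g\<close> is the basis element \<open>X^g\<close>.\<close>

abbreviation Xg :: "'g::comm_monoid_add \<Rightarrow> ('g \<Rightarrow>\<^sub>0 int)" where
  "Xg g \<equiv> Poly_Mapping.single g 1"

lemma Xg_add: "Xg (a + b) = Xg a * Xg b"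
  by (simp add: mult_single)

lemma Xg_nsmul: "Xg (nsmul n g) = Xg g ^ n"
  by (induct n) (simp_all add: Xg_add)

lemma prod_Xg: "finite I \<Longrightarrow> (\<Prod>j\<in>I. Xg (t j)) = Xg (sum t I)"
  by (induct I rule: finite_induct) (simp_all add: Xg_add)

lemma one_minus_Xg_add: "1 - Xg (a + b) = (1 - Xg a) + Xg a * (1 - Xg b)"
  by (simp add: Xg_add algebra_simps)

lemma lookup_of_nat_dvd:
  assumes "(of_nat p :: 'g::comm_monoid_add \<Rightarrow>\<^sub>0 int) dvd F"
  shows "int p dvd Poly_Mapping.lookup F k"
proof -
  obtain w where "F = of_nat p * w" using assms by blast
  then have "F = Poly_Mapping.map ((*) (int p)) w"
    by (simp add: mult_map_scale_conv_mult flip: single_of_nat)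
  then show ?thesis by (simp add: map.rep_eq when_def)
qed

lemma of_nat_prime_dvd_one_minus_Xg_power:
  fixes e :: "'g::ab_group_add"
  assumes p: "prime p"
  shows "(of_nat p :: 'g \<Rightarrow>\<^sub>0 int) dvd (1 - Xg e) ^ (p ^ m) - (1 - Xg (nsmul (p ^ m) e))"
proof (induct m)
  case 0
  then show ?case by simp
next
  case (Suc m)
  define h where "h = nsmul (p ^ m) e"
  define A where "A = (1 - Xg e :: 'g \<Rightarrow>\<^sub>0 int) ^ p ^ m"
  define B where "B = (1 - Xg h :: 'g \<Rightarrow>\<^sub>0 int)"
  have "(of_nat p :: 'g \<Rightarrow>\<^sub>0 int) dvd A ^ p - B ^ p"
    using Suc unfolding A_def B_def h_def by (rule dvd_power_diff)
  moreover have "(of_nat p :: 'g \<Rightarrow>\<^sub>0 int) dvd (B + Xg h) ^ p - B ^ p - Xg h ^ p"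
    by (rule of_nat_prime_dvd_add_power[OF p])
  moreover have "A ^ p - (1 - Xg h ^ p) = (A ^ p - B ^ p) - ((B + Xg h) ^ p - B ^ p - Xg h ^ p)"
    by (simp add: B_def)
  ultimately have "(of_nat p :: 'g \<Rightarrow>\<^sub>0 int) dvd A ^ p - (1 - Xg h ^ p)"
    by (metis dvd_diff)
  moreover have "nsmul (p ^ Suc m) e = nsmul p h"
    by (simp add: h_def nsmul_mult mult.commute)
  moreover have "(1 - Xg e) ^ p ^ Suc m = A ^ p"
    by (simp add: A_def mult.commute flip: power_mult)
  ultimately show ?case
    by (simp add: Xg_nsmul)
qed

lemma one_minus_Xg_nsmul_mem_ideal_span:
  assumes "1 - Xg g \<in> ideal.span Y"
  shows "1 - Xg (nsmul c g) \<in> ideal.span Y"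
proof (induct c)
  case (Suc c)
  then show ?case
    unfolding nsmul_Suc one_minus_Xg_add by (intro ideal.span_add ideal.span_scale assms)
qed (simp add: ideal.span_zero)

lemma one_minus_Xg_mem_ideal_span:
  "x \<in> nsmul_span gs \<Longrightarrow> 1 - Xg x \<in> ideal.span ((\<lambda>g. 1 - Xg g) ` set gs)"
proof (induct gs arbitrary: x)
  case (Cons g gs)
  then obtain c y where x: "x = nsmul c g + y" and y: "y \<in> nsmul_span gs"
    by (auto simp: cyclic_plus_def)
  have "ideal.span ((\<lambda>g. 1 - Xg g) ` set gs) \<subseteq> ideal.span ((\<lambda>g. 1 - Xg g) ` set (g # gs))"
    by (intro ideal.span_mono) auto
  then have "1 - Xg y \<in> ideal.span ((\<lambda>g. 1 - Xg g) ` set (g # gs))"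
    using Cons.hyps[OF y] by blast
  moreover have "1 - Xg g \<in> ideal.span ((\<lambda>g. 1 - Xg g) ` set (g # gs))"
    by (simp add: ideal.span_base)
  ultimately show ?case
    unfolding x one_minus_Xg_add
    by (intro ideal.span_add ideal.span_scale one_minus_Xg_nsmul_mem_ideal_span)
qed (simp add: ideal.span_zero)

lemma neg_one_power_mult_Xg: "(- 1) ^ n * Xg s = Poly_Mapping.single s ((- 1) ^ n)"
  by (induct n) (simp_all add: single_uminus)

lemma prod_one_minus_Xg:
  fixes t :: "'j \<Rightarrow> 'g::comm_monoid_add"
  assumes "finite J"
  shows "(\<Prod>j\<in>J. 1 - Xg (t j)) = (\<Sum>I\<in>Pow J. Poly_Mapping.single (sum t I) ((-1) ^ card I))"
proof -
  have "(\<Prod>j\<in>J. 1 - Xg (t j)) = (\<Sum>I\<in>Pow J. (\<Prod>j\<in>I. - Xg (t j)) * (\<Prod>j\<in>J - I. 1))"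
    using prod_add[OF assms, of "\<lambda>j. - Xg (t j)" "\<lambda>_. 1"] by simp
  also have "\<dots> = (\<Sum>I\<in>Pow J. Poly_Mapping.single (sum t I) ((-1) ^ card I))"
  proof (rule sum.cong)
    fix I assume "I \<in> Pow J"
    then have "finite I" using assms finite_subset by auto
    then have "(\<Prod>j\<in>I. - Xg (t j)) = (\<Prod>j\<in>I. - 1 * Xg (t j))"
      by simp
    also have "\<dots> = (- 1) ^ card I * Xg (sum t I)"
      using \<open>finite I\<close> by (simp only: prod.distrib prod_constant prod_Xg)
    finally show "(\<Prod>j\<in>I. - Xg (t j)) * (\<Prod>j\<in>J - I. 1) = Poly_Mapping.single (sum t I) ((-1) ^ card I)"
      by (simp add: neg_one_power_mult_Xg)
  qed simp
  finally show ?thesis .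
qed

lemma sum_exponents_extremal_seq:
  "(\<Sum>(y, d)\<leftarrow>map (\<lambda>(g, a). (1 - Xg g, p ^ a)) es. d - 1) = size (extremal_seq p es)"
  by (induct es) auto

text \<open>Olson's argument: in \<open>\<int>[G]\<close> every \<open>1 - X^x\<close> lies in the ideal generated by the \<open>1 - X^g_j\<close>,
  and \<open>(1 - X^g_j)^(p^a_j) \<equiv> 1 - X^(p^a_j g_j) = 0 (mod p)\<close>. Hence a product of more than
  \<open>\<Sum>_j (p^a_j - 1)\<close> factors \<open>1 - X^x\<close> vanishes mod \<open>p\<close>; its coefficients are signed counts
  of subsums.\<close>

theorem prime_dvd_signed_subsum_count:
  fixes t :: "'j \<Rightarrow> 'g::ab_group_add" and es :: "('g \<times> nat) list"
  assumes p: "prime p" and es: "\<forall>(g, a)\<in>set es. nsmul (p ^ a) g = 0"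
    and span: "nsmul_span (map fst es) = UNIV"
    and J: "finite J" "size (extremal_seq p es) < card J"
  shows "int p dvd (\<Sum>I\<in>Pow J. if sum t I = x then (-1) ^ card I else 0)"
proof -
  define gs :: "(('g \<Rightarrow>\<^sub>0 int) \<times> nat) list" where "gs = map (\<lambda>(g, a). (1 - Xg g, p ^ a)) es"
  have "(of_nat p :: 'g \<Rightarrow>\<^sub>0 int) dvd (\<Prod>j\<in>J. 1 - Xg (t j))"
  proof (rule prod_dvd_if_mem_ideal_span[OF _ J(1)])
    have "(of_nat p :: 'g \<Rightarrow>\<^sub>0 int) dvd (1 - Xg g) ^ p ^ a" if "(g, a) \<in> set es" for g a
      using of_nat_prime_dvd_one_minus_Xg_power[OF p, of g a] es that by auto
    then show "\<forall>(y, d)\<in>set gs. (of_nat p :: 'g \<Rightarrow>\<^sub>0 int) dvd y ^ d"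
      by (auto simp: gs_def)
    have "fst ` set gs = (\<lambda>g. 1 - Xg g) ` set (map fst es)"
      by (simp add: gs_def image_image split_def)
    then show "\<forall>j\<in>J. 1 - Xg (t j) \<in> ideal.span (fst ` set gs)"
      using one_minus_Xg_mem_ideal_span[of "t _" "map fst es"] span by simp
    show "(\<Sum>(y, d)\<leftarrow>gs. d - 1) < card J"
      using J(2) sum_exponents_extremal_seq[of p es] by (simp only: gs_def)
  qed
  from lookup_of_nat_dvd[OF this, of x] show ?thesis
    using J(1) by (simp add: prod_one_minus_Xg lookup_sum lookup_single when_def)
qed

lemma image_mset_nth_subseteq_mset:
  assumes "I \<subseteq> {..<length xs}"
  shows "image_mset (nth xs) (mset_set I) \<subseteq># mset xs"
proof -
  have "mset xs = image_mset (nth xs) (mset_set {..<length xs})"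
    by (metis map_nth mset_map mset_upt atLeast0LessThan)
  moreover have "mset_set I \<subseteq># mset_set {..<length xs}"
    using assms by (intro subset_imp_msubset_mset_set) auto
  ultimately show ?thesis
    by (simp add: image_mset_subseteq_mono)
qed

theorem davenport_eq_size_extremal_seq:
  fixes es :: "('g::{ab_group_add,finite} \<times> nat) list"
  assumes p: "prime p" and es: "\<forall>(g, a)\<in>set es. nsmul (p ^ a) g = 0"
    and span: "nsmul_span (map fst es) = UNIV" and zf: "zero_sumfree (extremal_seq p es)"
  shows "davenport TYPE('g) = size (extremal_seq p es) + 1"
  unfolding davenport_def
proof (rule Least_equality)
  show "0 < size (extremal_seq p es) + 1 \<and> (\<forall>S::'g multiset. size (extremal_seq p es) + 1 \<le> size S
    \<longrightarrow> (\<exists>S'. S' \<subseteq># S \<and> S' \<noteq> {#} \<and> sum_mset S' = 0))"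
  proof (intro conjI allI impI)
    fix S :: "'g multiset" assume size_S: "size (extremal_seq p es) + 1 \<le> size S"
    obtain xs where xs: "S = mset xs"
      by (metis ex_mset)
    \<comment> \<open>with \<open>x = 0\<close>, only \<open>I = {}\<close> would contribute to Olson's count if there were no zero subsum\<close>
    show "\<exists>S'. S' \<subseteq># S \<and> S' \<noteq> {#} \<and> sum_mset S' = 0"
    proof (rule ccontr)
      assume no: "\<nexists>S'. S' \<subseteq># S \<and> S' \<noteq> {#} \<and> sum_mset S' = 0"
      have "sum (nth xs) I \<noteq> 0" if "I \<in> Pow {..<length xs}" "I \<noteq> {}" for I
        using no that image_mset_nth_subseteq_mset[of I xs] finite_subset[of I "{..<length xs}"]
        by (auto simp: xs sum_unfold_sum_mset mset_set_empty_iff)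
      then have "(\<Sum>I\<in>Pow {..<length xs}. if sum (nth xs) I = 0 then (-1::int) ^ card I else 0)
          = (\<Sum>I\<in>Pow {..<length xs}. if I = {} then 1 else 0)"
        by (intro sum.cong) auto
      also have "\<dots> = 1"
        by (simp add: sum.delta')
      finally have "(\<Sum>I\<in>Pow {..<length xs}. if sum (nth xs) I = 0 then (-1::int) ^ card I else 0) = 1" .
      moreover have "int p dvd (\<Sum>I\<in>Pow {..<length xs}. if sum (nth xs) I = 0 then (-1) ^ card I else 0)"
        using size_S xs by (intro prime_dvd_signed_subsum_count[OF p es span]) auto
      ultimately show False
        using p by (simp add: prime_gt_1_nat)
    qed
  qed simp
next
  fix y assume "0 < y \<and> (\<forall>S::'g multiset. y \<le> size S \<longrightarrow> (\<exists>S'. S' \<subseteq># S \<and> S' \<noteq> {#} \<and> sum_mset S' = 0))"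
  then show "size (extremal_seq p es) + 1 \<le> y"
    using zf unfolding zero_sumfree_def by (metis not_less_eq_eq Suc_eq_plus1)
qed

section \<open>Zero-sum subsequences longer than \<open>k\<close>\<close>

lemma sum_Pow_insert:
  assumes "finite V" "x \<notin> V"
  shows "(\<Sum>W\<in>Pow (insert x V). f W) = (\<Sum>W\<in>Pow V. f W + f (insert x W))"
proof -
  have inj: "inj_on (insert x) (Pow V)"
    using assms(2) unfolding inj_on_def by (metis PowD insert_ident subsetD)
  have "(\<Sum>W\<in>Pow (insert x V). f W) = sum f (Pow V \<union> insert x ` Pow V)"
    by (simp only: Pow_insert)
  also have "\<dots> = sum f (Pow V) + sum f (insert x ` Pow V)"
    using assms by (intro sum.union_disjoint) auto
  also have "sum f (insert x ` Pow V) = (\<Sum>W\<in>Pow V. f (insert x W))"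
    using sum.reindex[OF inj] by simp
  finally show ?thesis
    by (simp add: sum.distrib)
qed

lemma sum_Pow_neg_one_power_card_diff:
  assumes "finite V" "V \<noteq> {}"
  shows "(\<Sum>W\<in>Pow V. (-1::int) ^ card (V - W)) = 0"
proof -
  obtain x where "x \<in> V"
    using assms(2) by blast
  define V0 where "V0 = V - {x}"
  have V: "V = insert x V0" "x \<notin> V0" "finite V0"
    using \<open>x \<in> V\<close> assms(1) by (auto simp: V0_def)
  have split: "(\<Sum>W\<in>Pow V. f W) = (\<Sum>W\<in>Pow V0. f W + f (insert x W))" for f :: "_ \<Rightarrow> int"
    using sum_Pow_insert[OF V(3,2)] by (simp add: V(1))
  have "(-1::int) ^ card (V - W) + (-1) ^ card (V - insert x W) = 0" if "W \<in> Pow V0" for W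
  proof -
    have "V - W = insert x (V0 - W)" "V - insert x W = V0 - W"
      using that V by auto
    then show ?thesis
      using V(2,3) by simp
  qed
  then show ?thesis
    by (simp add: split)
qed

lemma sum_Pow_card_neg_one_power_card_diff:
  assumes "finite V" "2 \<le> card V"
  shows "(\<Sum>W\<in>Pow V. int (card W) * (-1::int) ^ card (V - W)) = 0"
proof -
  obtain x where "x \<in> V"
    using assms(2) by fastforce
  define V0 where "V0 = V - {x}"
  have V: "V = insert x V0" "x \<notin> V0" "finite V0"
    using \<open>x \<in> V\<close> assms(1) by (auto simp: V0_def)
  then have "V0 \<noteq> {}"
    using assms(2) by auto
  have split: "(\<Sum>W\<in>Pow V. f W) = (\<Sum>W\<in>Pow V0. f W + f (insert x W))" for f :: "_ \<Rightarrow> int"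
    using sum_Pow_insert[OF V(3,2)] by (simp add: V(1))
  have "int (card W) * (-1::int) ^ card (V - W) + int (card (insert x W)) * (-1) ^ card (V - insert x W)
      = (-1) ^ card (V0 - W)" if "W \<in> Pow V0" for W
  proof -
    have "finite W" "x \<notin> W"
      using that V finite_subset by auto
    moreover have "V - W = insert x (V0 - W)" "V - insert x W = V0 - W"
      using that V by auto
    ultimately have "card (insert x W) = Suc (card W)" "V - W = insert x (V0 - W)" "V - insert x W = V0 - W"
      by simp_all
    then show ?thesis
      using V(2,3) by (simp add: algebra_simps)
  qed
  then have "(\<Sum>W\<in>Pow V. int (card W) * (-1::int) ^ card (V - W))
      = (\<Sum>W\<in>Pow V0. (-1::int) ^ card (V0 - W))"
    by (simp add: split)
  then show ?thesis
    using sum_Pow_neg_one_power_card_diff[OF V(3) \<open>V0 \<noteq> {}\<close>] by simp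
qed

lemma sum_Pow_weight_neg_one_power_card_diff:
  assumes "finite V" "2 \<le> card V" "card V \<le> k"
  shows "(\<Sum>W\<in>Pow V. int (k - card W) * (-1::int) ^ card (V - W)) = 0"
proof -
  have "int (k - card W) = int k - int (card W)" if "W \<in> Pow V" for W
    using that assms card_mono[of V W] by auto
  then have "(\<Sum>W\<in>Pow V. int (k - card W) * (-1::int) ^ card (V - W))
      = int k * (\<Sum>W\<in>Pow V. (-1) ^ card (V - W)) - (\<Sum>W\<in>Pow V. int (card W) * (-1) ^ card (V - W))"
    by (simp add: sum_distrib_left left_diff_distrib sum_subtractf)
  then show ?thesis
    using assms sum_Pow_neg_one_power_card_diff sum_Pow_card_neg_one_power_card_diff by fastforce
qed

lemma sum_Pow_sum_Pow_diff:
  assumes "finite U"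
  shows "(\<Sum>W\<in>Pow U. \<Sum>I\<in>Pow (U - W). F W I) = (\<Sum>V\<in>Pow U. \<Sum>W\<in>Pow V. F W (V - W))"
proof -
  have "(\<Sum>I\<in>Pow (U - W). F W I) = (\<Sum>V\<in>{V. V \<in> Pow U \<and> W \<subseteq> V}. F W (V - W))"
    if "W \<in> Pow U" for W
    by (rule sum.reindex_bij_witness[where i="\<lambda>V. V - W" and j="\<lambda>I. W \<union> I"])
      (use that in \<open>auto intro!: arg_cong[where f="F W"]\<close>)
  then have "(\<Sum>W\<in>Pow U. \<Sum>I\<in>Pow (U - W). F W I)
      = (\<Sum>W\<in>Pow U. \<Sum>V\<in>{V. V \<in> Pow U \<and> W \<subseteq> V}. F W (V - W))"
    by (rule sum.cong[OF refl])
  also have "\<dots> = (\<Sum>V\<in>Pow U. \<Sum>W\<in>{W. W \<in> Pow U \<and> W \<subseteq> V}. F W (V - W))"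
    by (rule sum.swap_restrict) (use assms in auto)
  also have "\<dots> = (\<Sum>V\<in>Pow U. \<Sum>W\<in>Pow V. F W (V - W))"
    by (intro sum.cong) auto
  finally show ?thesis .
qed

lemma sum_Pow_weighted_zero_subsum_indicator:
  fixes t :: "'j \<Rightarrow> 'g::ab_group_add"
  assumes "finite V" and "V \<noteq> {} \<Longrightarrow> sum t V = 0 \<Longrightarrow> 2 \<le> card V \<and> card V \<le> k"
  shows "(\<Sum>W\<in>Pow V. int (k - card W) *
      (if sum t (V - W) = - sum t W then (-1) ^ card (V - W) else 0)) = (if V = {} then int k else 0)"
proof -
  have eq: "sum t (V - W) = - sum t W \<longleftrightarrow> sum t V = 0" if "W \<in> Pow V" for W
    using that assms(1) sum.subset_diff[of W V t] by (auto simp: add_eq_0_iff2)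
  have "(\<Sum>W\<in>Pow V. int (k - card W) *
      (if sum t (V - W) = - sum t W then (-1) ^ card (V - W) else 0))
    = (\<Sum>W\<in>Pow V. if sum t V = 0 then int (k - card W) * (-1) ^ card (V - W) else 0)"
    by (rule sum.cong[OF refl]) (simp only: eq, simp)
  also have "\<dots> = (if sum t V = 0 then (\<Sum>W\<in>Pow V. int (k - card W) * (-1) ^ card (V - W)) else 0)"
    by simp
  also have "\<dots> = (if V = {} then int k else 0)"
    using assms sum_Pow_weight_neg_one_power_card_diff[OF assms(1)] by auto
  finally show ?thesis .
qed

text \<open>The weights \<open>k - |W|\<close> make the signed counts of Olson's theorem, taken over the complements of
  all small \<open>W\<close>, collapse to the contribution \<open>k\<close> of the empty subsum.\<close>

theorem exists_large_zero_subsum: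
  fixes t :: "'j \<Rightarrow> 'g::ab_group_add" and es :: "('g \<times> nat) list"
  assumes p: "prime p" and es: "\<forall>(g, a)\<in>set es. nsmul (p ^ a) g = 0"
    and span: "nsmul_span (map fst es) = UNIV"
    and U: "finite U" "card U = size (extremal_seq p es) + k" and k: "0 < k" "k < p"
    and nz: "\<forall>j\<in>U. t j \<noteq> 0"
  shows "\<exists>V\<subseteq>U. sum t V = 0 \<and> k < card V"
proof (rule ccontr)
  assume "\<not> ?thesis"
  then have small: "V \<subseteq> U \<Longrightarrow> sum t V = 0 \<Longrightarrow> card V \<le> k" for V
    by (meson not_less)
  define F where "F W I = int (k - card W) * (if sum t I = - sum t W then (-1) ^ card I else 0)"
    for W I
  have "int p dvd (\<Sum>I\<in>Pow (U - W). F W I)" if W: "W \<in> Pow U" for W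
  proof (cases "card W < k")
    case True
    have "card (U - W) = card U - card W"
      using W U(1) by (simp add: card_Diff_subset finite_subset)
    then have "size (extremal_seq p es) < card (U - W)"
      using True U(2) by simp
    then show ?thesis
      using prime_dvd_signed_subsum_count[OF p es span, of "U - W" t "- sum t W"] U(1)
      by (simp add: F_def dvd_mult flip: sum_distrib_left)
  qed (simp add: F_def)
  then have "int p dvd (\<Sum>W\<in>Pow U. \<Sum>I\<in>Pow (U - W). F W I)"
    by (rule dvd_sum)
  also have "\<dots> = (\<Sum>V\<in>Pow U. \<Sum>W\<in>Pow V. F W (V - W))"
    by (rule sum_Pow_sum_Pow_diff[OF U(1)])
  also have "\<dots> = (\<Sum>V\<in>Pow U. if V = {} then int k else 0)"
  proof (rule sum.cong[OF refl])
    fix V assume V: "V \<in> Pow U"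
    have "2 \<le> card V \<and> card V \<le> k" if "V \<noteq> {}" "sum t V = 0"
    proof -
      have "card V \<noteq> 1"
        using that(2) nz V by (auto simp: card_Suc_eq)
      moreover have "card V \<noteq> 0"
        using that(1) V U(1) finite_subset by fastforce
      ultimately show ?thesis
        using small V that(2) by fastforce
    qed
    then show "(\<Sum>W\<in>Pow V. F W (V - W)) = (if V = {} then int k else 0)"
      unfolding F_def using V U(1) finite_subset
      by (intro sum_Pow_weighted_zero_subsum_indicator) auto
  qed
  also have "\<dots> = int k"
    using U(1) by (simp add: sum.delta')
  finally show False
    using k by (simp add: nat_dvd_not_less)
qed

corollary exists_long_zero_sum_subseq:
  fixes T :: "'g::ab_group_add multiset" and es :: "('g \<times> nat) list"
  assumes p: "prime p" and es: "\<forall>(g, a)\<in>set es. nsmul (p ^ a) g = 0"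
    and span: "nsmul_span (map fst es) = UNIV"
    and T: "0 \<notin># T" "size T = size (extremal_seq p es) + k" and k: "0 < k" "k < p"
  shows "\<exists>T'. T' \<subseteq># T \<and> sum_mset T' = 0 \<and> k < size T'"
proof -
  obtain xs where xs: "T = mset xs"
    by (metis ex_mset)
  have "\<forall>j\<in>{..<length xs}. xs ! j \<noteq> 0"
    using T(1) xs nth_mem by fastforce
  moreover have "card {..<length xs} = size (extremal_seq p es) + k"
    using T(2) xs by simp
  ultimately have "\<exists>V\<subseteq>{..<length xs}. sum (nth xs) V = 0 \<and> k < card V"
    using exists_large_zero_subsum[OF p es span _ _ k] by blast
  then obtain V where V: "V \<subseteq> {..<length xs}" "sum (nth xs) V = 0" "k < card V"
    by blast
  then show ?thesis
    using image_mset_nth_subseteq_mset[OF V(1)]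
    by (intro exI[of _ "image_mset (nth xs) (mset_set V)"]) (simp add: xs sum_unfold_sum_mset)
qed

theorem zero_sum_bounded_seq_eq_replicate_zero_plus_zero_sumfree:
  fixes S :: "'g::{ab_group_add,finite} multiset"
  assumes p: "prime p" and card: "CARD('g) = p ^ n"
    and size_S: "size S = davenport TYPE('g) + i - 1" and i: "i < p"
    and bounded: "\<And>S'. S' \<subseteq># S \<Longrightarrow> sum_mset S' = 0 \<Longrightarrow> size S' \<le> i"
  shows "S = replicate_mset i 0 + {#x \<in># S. x \<noteq> 0#} \<and> zero_sumfree {#x \<in># S. x \<noteq> 0#}"
proof -
  have "\<forall>x::'g. nsmul (p ^ n) x = 0"
    using nsmul_card_eq_0 card by metis
  then obtain es :: "('g \<times> nat) list" where es: "\<forall>(g, a)\<in>set es. nsmul (p ^ a) g = 0"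
    and span: "nsmul_span (map fst es) = UNIV" and zf: "zero_sumfree (extremal_seq p es)"
    using exists_basis[OF p _ add_subgroup_UNIV] by fastforce
  define T where "T = {#x \<in># S. x \<noteq> 0#}"
  define Z where "Z = replicate_mset (count S 0) (0::'g)"
  have S: "S = Z + T"
    using multiset_partition[of S "\<lambda>x. x = 0"] by (simp add: T_def Z_def filter_eq_replicate_mset)
  have Z0: "sum_mset Z = 0" and size_Z: "size Z = count S 0"
    by (simp_all add: Z_def sum_mset_replicate_mset)
  have bounded_T: "size T' \<le> i - count S 0" if "T' \<subseteq># T" "sum_mset T' = 0" for T'
    using bounded[of "Z + T'"] that S Z0 size_Z by (simp add: subset_mset.add_left_mono)
  have "count S 0 \<le> i"
    using bounded[OF _ Z0] S size_Z by (metis mset_subset_eq_add_left)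
  moreover have "\<not> count S 0 < i"
  proof
    assume less: "count S 0 < i"
    have "size T = size (extremal_seq p es) + (i - count S 0)"
      using size_S arg_cong[where f = size, OF S] size_Z less
        davenport_eq_size_extremal_seq[OF p es span zf] by simp
    moreover have "0 \<notin># T"
      by (simp add: T_def)
    ultimately obtain T' where "T' \<subseteq># T" "sum_mset T' = 0" "i - count S 0 < size T'"
      using exists_long_zero_sum_subseq[OF p es span] less i
      by (meson diff_less_mono2 zero_less_diff le_less_trans diff_le_self)
    then show False
      using bounded_T by fastforce
  qed
  ultimately have count: "count S 0 = i"
    by simp
  have "zero_sumfree T"
    unfolding zero_sumfree_def
  proof (intro allI impI notI, elim conjE)
    fix S' assume "S' \<subseteq># T" "S' \<noteq> {#}" "sum_mset S' = 0"
    then show False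
      using bounded_T count by fastforce
  qed
  moreover have "S = replicate_mset i 0 + T"
    using S unfolding Z_def count .
  ultimately show ?thesis
    unfolding T_def by blast
qed

theorem corollary2p2:
  fixes p :: nat and i :: nat
    and \<phi> :: "'g::{ab_group_add,finite} \<Rightarrow> 'c::{ab_group_add,finite} \<times> 'h::{ab_group_add,finite}"
    and S :: "'g multiset"
  assumes "prime p"
    and "cyclic_group_type TYPE('c)" and "CARD('c) = p"
    and "\<exists>k. CARD('h) = p ^ k"
    and "group_iso \<phi>"
    and "normal_seq S"
    and "size S = davenport TYPE('g) + i - 1"
    and "1 \<le> i" and "i \<le> p - 1"
  shows "\<exists>T. S = replicate_mset i 0 + T \<and> zero_sumfree T"
proof -
  obtain k where k: "CARD('h) = p ^ k"
    using assms(4) by blast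
  have "CARD('g) = CARD('c \<times> 'h)"
    using assms(5) bij_betw_same_card unfolding group_iso_def by blast
  then have card: "CARD('g) = p ^ Suc k"
    using assms(3) k by (simp add: card_cartesian_product flip: UNIV_Times_UNIV)
  have "size S - davenport TYPE('g) + 1 = i"
    using assms(7,8) by simp
  then have bounded: "\<forall>S'. S' \<subseteq># S \<and> sum_mset S' = 0 \<longrightarrow> size S' \<le> i"
    using assms(6) unfolding normal_seq_def zero_sum_seq_def by simp
  have "i < p"
    using assms(9) prime_gt_0_nat[OF assms(1)] by linarith
  then show ?thesis
    using zero_sum_bounded_seq_eq_replicate_zero_plus_zero_sumfree[OF assms(1) card assms(7)] bounded
    by blast
qed

end
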